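(* For any nonempty rooted trees $a$ and $b$, $\Lambda(a\bowtie b)=\Lambda(a)\diamond\Lambda(b)$.
   Context: Let $k$ be a field of characteristic $0$. $\mathcal H_{CK}$ is the free commutative $k$-algebra on isomorphism classes of nonempty (non-planar, finite) rooted trees, i.e. rooted forests with unit the empty forest $\mathbf 1$; $B_+(t_1\cdots t_n)$ is the tree obtained by joining the roots of $t_1,\dots,t_n$ to a new root ($B_+(\mathbf 1)=\bullet$). $\mathcal A=k[x]$ carries the quasi-shuffle product $\diamond$, the commutative associative product determined by $\mathbf 1\diamond u=u\diamond\mathbf 1=u$ and, for $k,l\ge1$, $x^k\diamond x^l=(x^{k-1}\diamond x^l)x+(x^k\diamond x^{l-1})x+(x^{k-1}\diamond x^{l-1})x$. $\Lambda:\mathcal H_{CK}\to(\mathcal A,\diamond)$ is the unique unital algebra morphism with $\Lambda(B_+(t_1\cdots t_n))=(\Lambda(t_1)\diamond\cdots\diamond\Lambda(t_n))\,x$ for all trees (so $\Lambda(\bullet)=x$). For trees $a=B_+(a_1\cdots a_n)$ and $b=B_+(b_1\cdots b_p)$: the Butcher product is $a\circ b=B_+(a_1\cdots a_nb)$, the merging product is $a\times b=B_+(a_1\cdots a_nb_1\cdots b_p)$, and $a\bowtie b=a\circ b+b\circ a+a\times b$. *)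

theory Defs
  imports "HOL-Computational_Algebra.Polynomial" "HOL-Library.Multiset" "HOL-Library.Poly_Mapping"
begin

text \<open>Non-planar rooted trees: a root with a multiset of subtrees (so every tree is nonempty).\<close>
datatype tree = Node "tree multiset"

definition Bplus :: "tree multiset \<Rightarrow> tree" where
  "Bplus F = Node F"

fun children :: "tree \<Rightarrow> tree multiset" where
  "children (Node F) = F"

definition butcher :: "tree \<Rightarrow> tree \<Rightarrow> tree" where
  "butcher a b = Node (children a + {#b#})"

definition merging :: "tree \<Rightarrow> tree \<Rightarrow> tree" where
  "merging a b = Node (children a + children b)"

text \<open>H_CK: the free commutative algebra on trees, i.e. finitely supported
  k-linear combinations of forests (multisets of trees; the empty forest is the unit).\<close>
type_synonym 'k hck = "tree multiset \<Rightarrow>\<^sub>0 'k"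

definition tree_hck :: "tree \<Rightarrow> 'k::comm_ring_1 hck" where
  "tree_hck t = Poly_Mapping.single {#t#} 1"

definition bowtie :: "tree \<Rightarrow> tree \<Rightarrow> 'k::comm_ring_1 hck" where
  "bowtie a b = tree_hck (butcher a b) + tree_hck (butcher b a) + tree_hck (merging a b)"

fun qsh :: "nat \<Rightarrow> nat \<Rightarrow> 'k::comm_ring_1 poly" where
  "qsh 0 l = monom 1 l"
| "qsh (Suc k) 0 = monom 1 (Suc k)"
| "qsh (Suc k) (Suc l) = (qsh k (Suc l) + qsh (Suc k) l + qsh k l) * [:0, 1:]"

definition diamond :: "'k::comm_ring_1 poly \<Rightarrow> 'k poly \<Rightarrow> 'k poly" (infixl "\<diamondop>" 70) where
  "p \<diamondop> q = (\<Sum>i\<le>degree p. \<Sum>j\<le>degree q. smult (coeff p i * coeff q j) (qsh i j))"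

definition diam_mset :: "'k::comm_ring_1 poly multiset \<Rightarrow> 'k poly" where
  "diam_mset N = fold_mset diamond 1 N"

primrec Lam_tree :: "tree \<Rightarrow> 'k::comm_ring_1 poly" where
  "Lam_tree (Node F) = diam_mset (image_mset Lam_tree F) * [:0, 1:]"

definition Lam_forest :: "tree multiset \<Rightarrow> 'k::comm_ring_1 poly" where
  "Lam_forest F = diam_mset (image_mset Lam_tree F)"

definition Lam :: "'k::comm_ring_1 hck \<Rightarrow> 'k poly" where
  "Lam h = (\<Sum>F\<in>Poly_Mapping.keys h. smult (Poly_Mapping.lookup h F) (Lam_forest F))"

end

theory Submission
  imports Defs
begin

(* Read a polynomial in the binomial basis: for p = \<Sum> c_i x^i put
     binom_eval p N = \<Sum> c_i (N choose i),
   i.e. evaluate p after replacing x^i by the binomial polynomial (N choose i).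
   This map turns the quasi-shuffle product into the pointwise product of sequences
   (binom_eval (p \<diamondop> q) N = binom_eval p N * binom_eval q N) and multiplication by x
   into taking partial sums  partial_sum f N = \<Sum>n<N. f n.  It is injective, since its
   matrix (N choose i) is unitriangular.  Hence identities in (k[x], \<diamondop>) can be checked
   on sequences.
   For a tree t with children F, binom_eval (Lam_tree t) is the partial sum of the
   "root weight"  n \<mapsto> \<Prod>s\<in>#F. binom_eval (Lam_tree s) n.  Grafting b onto the root of a
   multiplies the root weight of a by binom_eval (Lam_tree b), merging multiplies the
   two root weights, so the theorem reduces to the discrete Leibniz rule
     partial_sum f N * partial_sum g N
       = partial_sum (\<lambda>n. f n * partial_sum g n + partial_sum f n * g n + f n * g n) N. *)

definition binom_eval :: "'k::comm_ring_1 poly \<Rightarrow> nat \<Rightarrow> 'k" where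
  "binom_eval p N = (\<Sum>i\<le>N. coeff p i * of_nat (N choose i))"

definition partial_sum :: "(nat \<Rightarrow> 'k::comm_ring_1) \<Rightarrow> nat \<Rightarrow> 'k" where
  "partial_sum f N = (\<Sum>n<N. f n)"

lemma partial_sum_cong: "(\<And>n. f n = g n) \<Longrightarrow> partial_sum f N = partial_sum g N"
  by (simp add: partial_sum_def)

lemma binom_eval_upto:
  assumes "\<And>i. i > M \<Longrightarrow> coeff p i * of_nat (N choose i) = 0"
  shows "binom_eval p N = (\<Sum>i\<le>M. coeff p i * of_nat (N choose i))"
proof -
  have "binom_eval p N = (\<Sum>i\<le>max M N. coeff p i * of_nat (N choose i))"
    unfolding binom_eval_def
    by (rule sum.mono_neutral_left) (auto simp: binomial_eq_0)
  also have "\<dots> = (\<Sum>i\<le>M. coeff p i * of_nat (N choose i))"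
    by (rule sum.mono_neutral_right) (auto intro: assms)
  finally show ?thesis .
qed

lemma binom_eval_by_degree:
  "binom_eval p N = (\<Sum>i\<le>degree p. coeff p i * of_nat (N choose i))"
  by (rule binom_eval_upto) (simp add: coeff_eq_0)

lemma binom_eval_add: "binom_eval (p + q) N = binom_eval p N + binom_eval q N"
  by (simp add: binom_eval_def algebra_simps sum.distrib)

lemma binom_eval_diff: "binom_eval (p - q) N = binom_eval p N - binom_eval q N"
  by (simp add: binom_eval_def algebra_simps sum_subtractf)

lemma binom_eval_smult: "binom_eval (smult c p) N = c * binom_eval p N"
  by (simp add: binom_eval_def sum_distrib_left mult.assoc)

lemma binom_eval_sum: "binom_eval (\<Sum>i\<in>A. f i) N = (\<Sum>i\<in>A. binom_eval (f i) N)"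
  by (induction A rule: infinite_finite_induct) (simp_all add: binom_eval_add binom_eval_def[of 0])

lemma binom_eval_monom: "binom_eval (monom c k) N = c * of_nat (N choose k)"
proof -
  have "binom_eval (monom c k) N = (\<Sum>i\<le>k. coeff (monom c k) i * of_nat (N choose i))"
    by (rule binom_eval_upto) (simp add: coeff_monom)
  also have "\<dots> = c * of_nat (N choose k)"
    by (simp add: coeff_monom if_distrib[where f="\<lambda>x. x * _"] cong: if_cong)
  finally show ?thesis .
qed

lemma binom_eval_one: "binom_eval 1 N = 1"
  using binom_eval_monom[of 1 0 N] by (simp add: one_pCons monom_0)

text \<open>Multiplication by x (p * [:0, 1:] = pCons 0 p) corresponds to partial summation,
  by Pascal's rule (Suc N choose Suc j) = (N choose Suc j) + (N choose j).\<close>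
lemma binom_eval_times_x:
  "binom_eval (pCons 0 p) N = partial_sum (binom_eval p) N"
proof (induction N)
  case 0
  then show ?case by (simp add: binom_eval_def partial_sum_def)
next
  case (Suc N)
  have shifted: "binom_eval (pCons 0 p) M = (\<Sum>j\<le>N. coeff p j * of_nat (M choose Suc j))"
    if "M \<le> Suc N" for M
  proof -
    have "binom_eval (pCons 0 p) M = (\<Sum>i\<le>Suc N. coeff (pCons 0 p) i * of_nat (M choose i))"
      by (rule binom_eval_upto) (use that in \<open>simp add: binomial_eq_0\<close>)
    then show ?thesis unfolding sum.atMost_Suc_shift by (simp del: sum.atMost_Suc)
  qed
  have "binom_eval (pCons 0 p) (Suc N) = binom_eval (pCons 0 p) N + binom_eval p N"
    unfolding shifted[OF order_refl] shifted[OF le_SucI[OF order_refl]] binom_eval_def[of p N]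
    by (simp add: sum.distrib[symmetric] algebra_simps)
  with Suc show ?case
    by (simp add: partial_sum_def)
qed

text \<open>Discrete Leibniz rule for partial sums; it mirrors the recursion of the quasi-shuffle.\<close>
lemma partial_sum_mult:
  "partial_sum f N * partial_sum g N
     = partial_sum (\<lambda>n. f n * partial_sum g n + partial_sum f n * g n + f n * g n) N"
  by (induction N) (simp_all add: partial_sum_def algebra_simps)

lemma of_nat_choose_Suc:
  "(of_nat (N choose Suc k) :: 'k::comm_ring_1) = partial_sum (\<lambda>n. of_nat (n choose k)) N"
proof (cases N)
  case 0
  then show ?thesis by (simp add: partial_sum_def)
next
  case (Suc M)
  have "(N choose Suc k) = (\<Sum>n\<le>M. n choose k)"
    using Suc sum_choose_upper by simp
  then show ?thesis
    using Suc by (simp add: partial_sum_def lessThan_Suc_atMost)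
qed

lemma binom_eval_qsh:
  "binom_eval (qsh k l :: 'k::comm_ring_1 poly) N = of_nat (N choose k) * of_nat (N choose l)"
proof (induction k l arbitrary: N rule: qsh.induct)
  case (1 l)
  then show ?case by (simp add: binom_eval_monom)
next
  case (2 k)
  then show ?case by (simp add: binom_eval_monom)
next
  case (3 k l)
  define c where "c = (\<lambda>j n. of_nat (n choose j) :: 'k)"
  have "binom_eval (qsh (Suc k) (Suc l) :: 'k poly) N
      = partial_sum (\<lambda>n. c k n * c (Suc l) n + c (Suc k) n * c l n + c k n * c l n) N"
    by (simp add: binom_eval_times_x) (rule partial_sum_cong, simp add: binom_eval_add 3 c_def)
  also have "\<dots> = partial_sum (c k) N * partial_sum (c l) N"
    by (simp add: partial_sum_mult c_def of_nat_choose_Suc)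
  finally show ?case
    by (simp add: c_def of_nat_choose_Suc)
qed

lemma binom_eval_diamond: "binom_eval (p \<diamondop> q) N = binom_eval p N * binom_eval q N"
  unfolding diamond_def binom_eval_sum binom_eval_smult binom_eval_qsh
    binom_eval_by_degree[of p] binom_eval_by_degree[of q] sum_product
  by (simp add: algebra_simps)

text \<open>binom_eval is injective: at N the lowest nonzero coefficient index, only that
  coefficient contributes.\<close>
lemma binom_eval_eq_0_imp:
  assumes "\<And>N. binom_eval p N = 0"
  shows "p = 0"
proof (rule ccontr)
  assume "p \<noteq> 0"
  then have ex: "\<exists>i. coeff p i \<noteq> 0"
    using leading_coeff_neq_0 by blast
  define i0 where "i0 = (LEAST i. coeff p i \<noteq> 0)"
  have nonzero: "coeff p i0 \<noteq> 0"
    unfolding i0_def by (rule LeastI_ex[OF ex])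
  have below: "coeff p i = 0" if "i < i0" for i
    using that not_less_Least unfolding i0_def by blast
  have "binom_eval p i0 = (\<Sum>i<i0. coeff p i * of_nat (i0 choose i)) + coeff p i0"
    unfolding binom_eval_def by (simp add: lessThan_Suc_atMost[symmetric])
  also have "\<dots> = coeff p i0"
    by (simp add: below)
  finally show False
    using assms nonzero by simp
qed

lemma binom_eval_inject: "(\<And>N. binom_eval p N = binom_eval q N) \<Longrightarrow> p = q"
  using binom_eval_eq_0_imp[of "p - q"] by (simp add: binom_eval_diff)

text \<open>Consequences for the quasi-shuffle product: it is left-commutative with unit 1, so
  folding it over a multiset is well defined and binom_eval turns it into a product.\<close>

lemma diamond_one_right: "p \<diamondop> 1 = p"
  by (rule binom_eval_inject) (simp add: binom_eval_diamond binom_eval_one)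

lemma comp_fun_commute_diamond: "comp_fun_commute (diamond :: 'k::comm_ring_1 poly \<Rightarrow> _)"
  by unfold_locales
    (auto simp: fun_eq_iff binom_eval_diamond algebra_simps intro!: binom_eval_inject)

lemma binom_eval_diam_mset: "binom_eval (diam_mset M) N = (\<Prod>p\<in>#M. binom_eval p N)"
  by (induction M)
    (simp_all add: diam_mset_def binom_eval_one binom_eval_diamond
      comp_fun_commute.fold_mset_add_mset[OF comp_fun_commute_diamond])

definition root_weight :: "tree \<Rightarrow> nat \<Rightarrow> 'k::comm_ring_1" where
  "root_weight t n = (\<Prod>s\<in>#children t. binom_eval (Lam_tree s) n)"

lemma binom_eval_Lam_tree:
  "binom_eval (Lam_tree t :: 'k::comm_ring_1 poly) N = partial_sum (root_weight t) N"
  by (cases t) (simp add: binom_eval_times_x, rule partial_sum_cong,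
    simp add: binom_eval_diam_mset root_weight_def image_mset.compositionality o_def)

lemma root_weight_butcher:
  "root_weight (butcher a b) = (\<lambda>n. root_weight a n * partial_sum (root_weight b) n)"
  by (simp add: fun_eq_iff root_weight_def butcher_def binom_eval_Lam_tree)

lemma root_weight_merging:
  "root_weight (merging a b) = (\<lambda>n. root_weight a n * root_weight b n)"
  by (simp add: fun_eq_iff root_weight_def merging_def)

lemma Lam_over_superset:
  assumes "finite K" "Poly_Mapping.keys h \<subseteq> K"
  shows "Lam h = (\<Sum>F\<in>K. smult (Poly_Mapping.lookup h F) (Lam_forest F))"
  unfolding Lam_def
  by (rule sum.mono_neutral_left) (use assms in \<open>auto simp: in_keys_iff\<close>)

lemma Lam_add: "Lam (h + g) = Lam h + (Lam g :: 'k::comm_ring_1 poly)"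
proof -
  let ?K = "Poly_Mapping.keys h \<union> Poly_Mapping.keys g"
  let ?term = "\<lambda>h F. smult (Poly_Mapping.lookup h F) (Lam_forest F :: 'k poly)"
  have "Lam (h + g) = (\<Sum>F\<in>?K. ?term (h + g) F)"
    by (rule Lam_over_superset) (auto dest: set_mp[OF keys_add])
  also have "\<dots> = (\<Sum>F\<in>?K. ?term h F) + (\<Sum>F\<in>?K. ?term g F)"
    by (simp add: lookup_add smult_add_left sum.distrib)
  also have "\<dots> = Lam h + Lam g"
    by (subst (1 2) Lam_over_superset[symmetric]) auto
  finally show ?thesis .
qed

lemma Lam_tree_hck: "Lam (tree_hck t :: 'k::comm_ring_1 hck) = Lam_tree t"
  by (simp add: Lam_def tree_hck_def Lam_forest_def diam_mset_def diamond_one_right)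

lemma Lam_bowtie:
  "Lam (bowtie a b :: 'k::comm_ring_1 hck)
     = Lam_tree (butcher a b) + Lam_tree (butcher b a) + Lam_tree (merging a b)"
  by (simp add: bowtie_def Lam_add Lam_tree_hck)

theorem mainTheorem13:
  fixes a b :: tree
  shows "(Lam (bowtie a b :: 'k::field_char_0 hck)) = Lam_tree a \<diamondop> Lam_tree b"
proof (rule binom_eval_inject)
  fix N
  let ?A = "root_weight a :: nat \<Rightarrow> 'k" and ?B = "root_weight b :: nat \<Rightarrow> 'k"
  have "binom_eval (Lam (bowtie a b :: 'k hck)) N
      = partial_sum (\<lambda>n. ?A n * partial_sum ?B n) N + partial_sum (\<lambda>n. ?B n * partial_sum ?A n) N
        + partial_sum (\<lambda>n. ?A n * ?B n) N"
    by (simp add: Lam_bowtie binom_eval_add binom_eval_Lam_tree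
        root_weight_butcher root_weight_merging)
  also have "\<dots> = partial_sum ?A N * partial_sum ?B N"
    unfolding partial_sum_mult by (simp add: partial_sum_def sum.distrib algebra_simps)
  also have "\<dots> = binom_eval (Lam_tree a \<diamondop> Lam_tree b) N"
    by (simp add: binom_eval_diamond binom_eval_Lam_tree)
  finally show "binom_eval (Lam (bowtie a b :: 'k hck)) N = binom_eval (Lam_tree a \<diamondop> Lam_tree b) N" .
qed

end
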